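(* Let $X$ be an $n$-globular set and let $y\in T_n^{D^s}(T_n^{D^s}(X))$ be an element whose underlying diagram is a block $B$ and whose minimal labels $D_1,\dots,D_\ell\in T_n^{D^s}(X)$ are nontrivial with $M(D_j)<m(B)$ for all $j$. Then $H(D_j)=H(\mu_X(y))-1$ for all $j$.
   Context: An $n$-globular set $X$: sets $X_0,\dots,X_n$ and maps $s,t\colon X_k\to X_{k-1}$ with $ss=st$, $ts=tt$. $\langle\ell\rangle=\{1<\dots<\ell\}$. A simple $k$-string diagram $D$: numbers $\ell_0=1,\ell_1,\dots,\ell_k\ge0$ and arbitrary functions $v^m\colon\langle\ell_m\rangle\to\langle\ell_{m-1}\rangle$; its source and target are both $(v^1,\dots,v^{k-1})$. An $X$-labelling of $D$: elements $x^m_i\in X_m$ ($0\le m\le k$, $1\le i\le\ell_m$) such that for $m\ge1$, $s(x^m_i)=x^{m-1}_{v^m(i)}$ if $i=\min\{j:v^m(j)=v^m(i)\}$ and otherwise $s(x^m_i)=t(x^m_p)$ with $p=\max\{j<i:v^m(j)=v^m(i)\}$. The source of $(D,x)$ is $(s(D),(x^m_i)_{m\le k-1})$; its target is the same except that for $i\in\mathrm{im}(v^k)$ the label $x^{k-1}_i$ is replaced by $t(x^k_p)$, $p=\max\{j:v^k(j)=i\}$. $T_n^{D^s}(X)_k$ is the set of $X$-labelled simple $k$-string diagrams, an $n$-globular set with these source/target maps. The multiplication $\mu_X\colon T_n^{D^s}(T_n^{D^s}(X))\to T_n^{D^s}(X)$: if a $k$-diagram $D$ is labelled by labelled $m$-diagrams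 $E^m_i$ with underlying diagrams $D^m_i$ (compatibility forces $\ell_j(D^m_i)=\ell_j(D^{m-1}_{v^m(i)})$, $v^j(D^m_i)=v^j(D^{m-1}_{v^m(i)})$ for $j<m$), the composite has level-$m$ set $\coprod_{i=1}^{\ell_m}\langle\ell_m(D^m_i)\rangle$, ordered by component index first and then internally, with map to level $m-1$ sending $a$ in component $i$ to $v^m(D^m_i)(a)$ in component $v^m(i)$, and with $a$ in component $i$ at level $m$ labelled by the $m$-dimensional label at $a$ of $E^m_i$. All notions below for labelled diagrams refer to the underlying diagram. $H(D)=|\{i:\ell_i(D)>1\}|$. $D$ is nondegenerate if $\ell_i(D)>0$ for all $1\le i\le k$, nontrivial if moreover $\ell_i(D)>1$ for some $i$. For nontrivial $D$: $m(D)=\min\{j:\ell_j(D)>1\}$, $M(D)=\max\{j:\ell_j(D)>1\}$. A block is a nontrivial $D$ with $m(D)=M(D)$; the blocks are $B^k(i,\ell,p)$ ($1\le i<k$, $\ell>1$, $1\le p\le\ell$: $\ell_i=\ell$, $\ell_j=1$ for $j\neq i$, $v^{i+1}=(p)$, other maps constant) and $B^k(k,\ell)$ ($\ell>1$: $\ell_k=\ell$, $\ell_j=1$ for $j<k$). The minimal labels of a labelled block are $x_1,\dots,x_\ell$ where, for $B^k(i,\ell,p)$, $x_j=x^i_j$ ($j\ne p$) and $x_p=x^k_1$, and for $B^k(k,\ell)$, $x_j=x^k_j$; they determine the labelling. *)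

theory Defs
  imports Main
begin

text \<open>Indices are 0-based internally: the paper's element i of
  \<langle>l\<rangle> = {1<...<l} is represented by i-1 in {0..<l}.
  A simple k-string diagram is a list vs of length k; vs!(m-1) is the map v^m,
  given as the list of its values (so its length is l_m). l_0 = 1.
  A labelled diagram is a pair (vs, xs) with xs a list of length k+1 and
  xs!m the list of m-dimensional labels (x^m_i). Lists give a canonical
  representation, so equality of labelled diagrams is the intended one.\<close>

definition globular :: "nat \<Rightarrow> (nat \<Rightarrow> 'a set) \<Rightarrow> (nat \<Rightarrow> 'a \<Rightarrow> 'a) \<Rightarrow> (nat \<Rightarrow> 'a \<Rightarrow> 'a) \<Rightarrow> bool" where
  "globular n X s t \<longleftrightarrow>
     (\<forall>k. 1 \<le> k \<and> k \<le> n \<longrightarrow> (\<forall>x\<in>X k. s k x \<in> X (k-1) \<and> t k x \<in> X (k-1))) \<and>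
     (\<forall>k. 2 \<le> k \<and> k \<le> n \<longrightarrow> (\<forall>x\<in>X k. s (k-1) (s k x) = s (k-1) (t k x)
                                        \<and> t (k-1) (s k x) = t (k-1) (t k x)))"

type_synonym diag = "nat list list"
type_synonym 'a ldiag = "nat list list \<times> 'a list list"

definition dg_ell :: "diag \<Rightarrow> nat \<Rightarrow> nat" where
  "dg_ell vs m = (if m = 0 then 1 else length (vs ! (m-1)))"

definition simple_diag :: "nat \<Rightarrow> diag \<Rightarrow> bool" where
  "simple_diag k vs \<longleftrightarrow> length vs = k \<and>
     (\<forall>m\<in>{1..k}. \<forall>i<dg_ell vs m. vs!(m-1)!i < dg_ell vs (m-1))"

definition labelling_in :: "(nat \<Rightarrow> 'a set) \<Rightarrow> (nat \<Rightarrow> 'a \<Rightarrow> 'a) \<Rightarrow> (nat \<Rightarrow> 'a \<Rightarrow> 'a) \<Rightarrow> nat \<Rightarrow> 'a ldiag \<Rightarrow> bool" where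
  "labelling_in X s t k D \<longleftrightarrow>
     (let vs = fst D; xs = snd D in
       simple_diag k vs \<and> length xs = Suc k \<and>
       (\<forall>m\<le>k. length (xs!m) = dg_ell vs m \<and> (\<forall>i<dg_ell vs m. xs!m!i \<in> X m)) \<and>
       (\<forall>m\<in>{1..k}. \<forall>i<dg_ell vs m. let w = vs!(m-1) in
          (if (\<forall>j<i. w!j \<noteq> w!i) then s m (xs!m!i) = xs!(m-1)!(w!i)
           else s m (xs!m!i) = t m (xs!m!(Max {j. j < i \<and> w!j = w!i})))))"

definition Tset :: "(nat \<Rightarrow> 'a set) \<Rightarrow> (nat \<Rightarrow> 'a \<Rightarrow> 'a) \<Rightarrow> (nat \<Rightarrow> 'a \<Rightarrow> 'a) \<Rightarrow> nat \<Rightarrow> 'a ldiag set" where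
  "Tset X s t k = {D. labelling_in X s t k D}"

definition Tsrc :: "'a ldiag \<Rightarrow> 'a ldiag" where
  "Tsrc D = (butlast (fst D), butlast (snd D))"

definition Ttgt :: "(nat \<Rightarrow> 'a \<Rightarrow> 'a) \<Rightarrow> 'a ldiag \<Rightarrow> 'a ldiag" where
  "Ttgt t D = (let vs = fst D; xs = snd D; k = length vs; w = last vs in
     (butlast vs,
      (butlast xs)[k-1 := map (\<lambda>i. if i \<in> set w
                                   then t k (xs!k!(Max {j. j < length w \<and> w!j = i}))
                                   else xs!(k-1)!i) [0..<length (xs!(k-1))]]))"

definition TTset :: "(nat \<Rightarrow> 'a set) \<Rightarrow> (nat \<Rightarrow> 'a \<Rightarrow> 'a) \<Rightarrow> (nat \<Rightarrow> 'a \<Rightarrow> 'a) \<Rightarrow> nat \<Rightarrow> 'a ldiag ldiag set" where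
  "TTset X s t k = Tset (Tset X s t) (\<lambda>_. Tsrc) (\<lambda>_. Ttgt t) k"

definition mu :: "'a ldiag ldiag \<Rightarrow> 'a ldiag" where
  "mu y = (let vs = fst y; E = snd y; k = length vs;
             off = (\<lambda>m j. sum_list (map (\<lambda>i. length (snd (E!m!i) ! m)) [0..<j])) in
     (map (\<lambda>m. concat (map (\<lambda>i. map (\<lambda>a. off (m-1) (vs!(m-1)!i) + a) (fst (E!m!i) ! (m-1)))
                          [0..<dg_ell vs m])) [1..<Suc k],
      map (\<lambda>m. concat (map (\<lambda>i. snd (E!m!i) ! m) [0..<dg_ell vs m])) [0..<Suc k]))"

definition ell :: "('b ldiag) \<Rightarrow> nat \<Rightarrow> nat" where
  "ell D m = dg_ell (fst D) m"

definition ddim :: "'b ldiag \<Rightarrow> nat" where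
  "ddim D = length (fst D)"

definition big_levels :: "'b ldiag \<Rightarrow> nat set" where
  "big_levels D = {i. i \<le> ddim D \<and> ell D i > 1}"

definition H :: "'b ldiag \<Rightarrow> nat" where
  "H D = card (big_levels D)"

definition nondegenerate :: "'b ldiag \<Rightarrow> bool" where
  "nondegenerate D \<longleftrightarrow> (\<forall>i\<in>{1..ddim D}. ell D i > 0)"

definition nontrivial :: "'b ldiag \<Rightarrow> bool" where
  "nontrivial D \<longleftrightarrow> nondegenerate D \<and> (\<exists>i\<in>{1..ddim D}. ell D i > 1)"

definition mlev :: "'b ldiag \<Rightarrow> nat" where
  "mlev D = Min (big_levels D)"

definition Mlev :: "'b ldiag \<Rightarrow> nat" where
  "Mlev D = Max (big_levels D)"

definition is_block :: "'b ldiag \<Rightarrow> bool" where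
  "is_block D \<longleftrightarrow> nontrivial D \<and> mlev D = Mlev D"

text \<open>Minimal labels of a labelled block. For B^k(i,l,p) with i<k:
  x_j = x^i_j (j \<noteq> p), x_p = x^k_1, where v^{i+1} = (p);
  for B^k(k,l): x_j = x^k_j. (Here i = m(B).)\<close>
definition minimal_labels :: "'b ldiag \<Rightarrow> 'b list" where
  "minimal_labels D = (let k = ddim D; i = mlev D in
     if i = k then snd D ! k
     else (snd D ! i)[(fst D ! i ! 0) := snd D ! k ! 0])"

end

theory Submission
  imports Defs
begin

text \<open>Let B be the block underlying y. Since the source and the target of a labelled diagram
  have the same underlying diagram, the compatibility conditions of y say that the diagram of the
  label of a cell at level m, truncated to level m-1, is the diagram of the label of the cell
  below it. So at every level q other than m(B), where B has a single cell, all labels at or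
  above q have as many level-q cells as mu(y). At level m(B) every label has a single cell, the
  minimal labels because M(D_j) < m(B), the remaining one because it lies below the top label,
  which is minimal; hence mu(y) has as many cells there as B. Above m(B), mu(y) has as many cells
  as the top label, i.e. one. Thus the levels where mu(y) has several cells are those of D_j
  together with m(B).\<close>

abbreviation label :: "'b ldiag ldiag \<Rightarrow> nat \<Rightarrow> nat \<Rightarrow> 'b ldiag" where
  "label y m j \<equiv> snd y ! m ! j"

lemma labelling_in_length: "labelling_in X s t k D \<Longrightarrow> length (fst D) = k"
  by (simp add: labelling_in_def simple_diag_def Let_def)

lemma labelling_in_parent_less:
  "labelling_in X s t k D \<Longrightarrow> Suc m \<le> k \<Longrightarrow> i < ell D (Suc m) \<Longrightarrow> fst D ! m ! i < ell D m"
  by (fastforce simp: labelling_in_def simple_diag_def Let_def ell_def)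

lemma labelling_in_length_labels:
  "labelling_in X s t k D \<Longrightarrow> m \<le> k \<Longrightarrow> length (snd D ! m) = ell D m"
  by (simp add: labelling_in_def Let_def ell_def)

lemma labelling_in_label_mem:
  "labelling_in X s t k D \<Longrightarrow> m \<le> k \<Longrightarrow> i < ell D m \<Longrightarrow> snd D ! m ! i \<in> X m"
  by (simp add: labelling_in_def Let_def ell_def)

lemma labelling_in_source:
  assumes "labelling_in X s t k D" "Suc m \<le> k" "i < ell D (Suc m)"
  defines "w \<equiv> fst D ! m"
  shows "if \<forall>j<i. w ! j \<noteq> w ! i
         then s (Suc m) (snd D ! Suc m ! i) = snd D ! m ! (w ! i)
         else s (Suc m) (snd D ! Suc m ! i) = t (Suc m) (snd D ! Suc m ! Max {j. j < i \<and> w ! j = w ! i})"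
proof -
  have "\<forall>m\<in>{1..k}. \<forall>i<dg_ell (fst D) m. let w = fst D ! (m-1) in
          if \<forall>j<i. w ! j \<noteq> w ! i then s m (snd D ! m ! i) = snd D ! (m-1) ! (w ! i)
          else s m (snd D ! m ! i) = t m (snd D ! m ! Max {j. j < i \<and> w ! j = w ! i})"
    using assms(1) unfolding labelling_in_def Let_def by meson
  from this[rule_format, of "Suc m" i] assms(2,3) show ?thesis
    unfolding w_def Let_def ell_def by simp
qed

lemma ddim_Tset: "D \<in> Tset X s t k \<Longrightarrow> ddim D = k"
  by (simp add: Tset_def ddim_def labelling_in_length)

lemma TTset_labelling:
  "y \<in> TTset X s t k \<Longrightarrow> labelling_in (Tset X s t) (\<lambda>_. Tsrc) (\<lambda>_. Ttgt t) k y"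
  by (simp add: TTset_def Tset_def)

lemma ddim_TTset: "y \<in> TTset X s t k \<Longrightarrow> ddim y = k"
  by (simp add: ddim_def labelling_in_length[OF TTset_labelling])

lemma ddim_label_TTset:
  "y \<in> TTset X s t k \<Longrightarrow> m \<le> k \<Longrightarrow> j < ell y m \<Longrightarrow> ddim (label y m j) = m"
  by (metis TTset_labelling labelling_in_label_mem ddim_Tset)

lemma fst_Tsrc: "fst (Tsrc D) = butlast (fst D)"
  by (simp add: Tsrc_def)

lemma fst_Ttgt: "fst (Ttgt t D) = butlast (fst D)"
  by (simp add: Ttgt_def Let_def)

lemma butlast_fst_label_TTset:
  assumes y: "y \<in> TTset X s t k" and m: "Suc m \<le> k"
  shows "j < ell y (Suc m) \<Longrightarrow>
    butlast (fst (label y (Suc m) j)) = fst (label y m (fst y ! m ! j))"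
proof (induction j rule: less_induct)
  case (less j)
  let ?w = "fst y ! m"
  let ?prev = "{i. i < j \<and> ?w ! i = ?w ! j}"
  note source = labelling_in_source[OF TTset_labelling[OF y] m less.prems]
  show ?case
  proof (cases "\<forall>i<j. ?w ! i \<noteq> ?w ! j")
    case True
    then have "Tsrc (label y (Suc m) j) = label y m (?w ! j)"
      using source by simp
    from arg_cong[where f = fst, OF this] show ?thesis by (simp add: fst_Tsrc)
  next
    case False
    then have "?prev \<noteq> {}" by blast
    then have "Max ?prev \<in> ?prev" by (intro Max_in) auto
    then have prev: "Max ?prev < j" "?w ! Max ?prev = ?w ! j" by auto
    have "Tsrc (label y (Suc m) j) = Ttgt t (label y (Suc m) (Max ?prev))"
      using source False by simp
    from arg_cong[where f = fst, OF this]
    have "butlast (fst (label y (Suc m) j)) = butlast (fst (label y (Suc m) (Max ?prev)))"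
      by (simp add: fst_Tsrc fst_Ttgt)
    also have "\<dots> = fst (label y m (?w ! j))"
      using less.IH[OF prev(1)] prev less.prems by simp
    finally show ?thesis .
  qed
qed

lemma ell_label_parent_TTset:
  assumes y: "y \<in> TTset X s t k" and "Suc m \<le> k" "j < ell y (Suc m)" "q \<le> m"
  shows "ell (label y (Suc m) j) q = ell (label y m (fst y ! m ! j)) q"
proof -
  have "length (fst (label y (Suc m) j)) = Suc m"
    using ddim_label_TTset[OF y assms(2,3)] by (simp add: ddim_def)
  then have "ell (label y (Suc m) j) q = dg_ell (butlast (fst (label y (Suc m) j))) q"
    using assms(4) by (simp add: ell_def dg_ell_def nth_butlast)
  then show ?thesis
    using butlast_fst_label_TTset[OF y assms(2,3)] by (simp add: ell_def)
qed

lemma ell_label_ancestor_TTset: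
  assumes y: "y \<in> TTset X s t k" and "q \<le> r" "r \<le> m" "m \<le> k" "j < ell y m"
  shows "\<exists>j'<ell y r. ell (label y m j) q = ell (label y r j') q"
  using assms(3-5)
proof (induction m arbitrary: j)
  case 0
  then show ?case by auto
next
  case (Suc m)
  show ?case
  proof (cases "r = Suc m")
    case False
    then have "r \<le> m" "q \<le> m" using Suc.prems \<open>q \<le> r\<close> by simp_all
    have parent: "fst y ! m ! j < ell y m"
      using labelling_in_parent_less[OF TTset_labelling[OF y]] Suc.prems by blast
    obtain j' where "j' < ell y r" "ell (label y m (fst y ! m ! j)) q = ell (label y r j') q"
      using Suc.IH[OF \<open>r \<le> m\<close> _ parent] Suc.prems by auto
    moreover have "ell (label y (Suc m) j) q = ell (label y m (fst y ! m ! j)) q"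
      using ell_label_parent_TTset[OF y _ _ \<open>q \<le> m\<close>] Suc.prems by simp
    ultimately show ?thesis by auto
  qed (use Suc.prems in auto)
qed

corollary ell_label_single_ancestor_TTset:
  assumes "y \<in> TTset X s t k" "q \<le> r" "r \<le> m" "m \<le> k" "j < ell y m" "ell y r = 1"
  shows "ell (label y m j) q = ell (label y r 0) q"
  using ell_label_ancestor_TTset[OF assms(1-5)] assms(6) by auto

lemma ell_mu_TTset:
  assumes y: "y \<in> TTset X s t k" and "m \<le> k"
  shows "ell (mu y) m = (\<Sum>i<ell y m. ell (label y m i) m)"
proof (cases m)
  case 0
  then show ?thesis by (simp add: ell_def dg_ell_def)
next
  case (Suc m')
  have "[1..<Suc k] ! m' = m" "m' < length [1..<Suc k]"
    using assms(2) Suc by (simp_all del: upt_Suc)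
  then have "ell (mu y) m = (\<Sum>i\<leftarrow>[0..<ell y m]. length (fst (label y m i) ! m'))"
    using Suc unfolding mu_def Let_def ell_def dg_ell_def labelling_in_length[OF TTset_labelling[OF y]]
    by (simp add: length_concat comp_def del: upt_Suc)
  also have "\<dots> = (\<Sum>i<ell y m. ell (label y m i) m)"
    using Suc by (simp add: sum_list_sum_nth atLeast0LessThan ell_def dg_ell_def)
  finally show ?thesis .
qed

lemma ddim_mu_TTset: "y \<in> TTset X s t k \<Longrightarrow> ddim (mu y) = k"
  by (simp add: ddim_def mu_def Let_def labelling_in_length[OF TTset_labelling] del: upt_Suc)

lemma ell_label_eq_ell_mu_TTset:
  assumes y: "y \<in> TTset X s t k" and "q \<le> m" "m \<le> k" "j < ell y m" "ell y q = 1"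
  shows "ell (label y m j) q = ell (mu y) q"
  using ell_label_single_ancestor_TTset[OF y order.refl assms(2-5)]
    ell_mu_TTset[OF y, of q] assms by simp

lemma finite_big_levels: "finite (big_levels D)"
  by (rule finite_subset[of _ "{..ddim D}"]) (auto simp: big_levels_def)

lemma big_levels_le_Mlev: "q \<in> big_levels D \<Longrightarrow> q \<le> Mlev D"
  unfolding Mlev_def by (simp add: finite_big_levels)

lemma ell_eq_1_above_Mlev:
  assumes "nondegenerate D" "Mlev D < q" "q \<le> ddim D"
  shows "ell D q = 1"
proof -
  have "ell D q > 0" using assms by (auto simp: nondegenerate_def)
  moreover have "q \<notin> big_levels D" using big_levels_le_Mlev assms(2) by fastforce
  ultimately show ?thesis using assms(3) by (simp add: big_levels_def)
qed

lemma mlev_in_big_levels: "nontrivial D \<Longrightarrow> mlev D \<in> big_levels D"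
  unfolding mlev_def nontrivial_def
  by (rule Min_in[OF finite_big_levels]) (auto simp: big_levels_def)

lemma ell_block_eq_1:
  assumes "is_block D" "q \<le> ddim D" "q \<noteq> mlev D"
  shows "ell D q = 1"
proof (cases "q = 0")
  case False
  have "q \<notin> big_levels D"
  proof
    assume "q \<in> big_levels D"
    then have "mlev D \<le> q" "q \<le> Mlev D"
      by (simp_all add: mlev_def big_levels_le_Mlev finite_big_levels)
    then show False using assms(1,3) by (simp add: is_block_def)
  qed
  moreover have "ell D q > 0"
    using assms(1,2) False by (auto simp: is_block_def nontrivial_def nondegenerate_def)
  ultimately show ?thesis using assms(2) by (simp add: big_levels_def)
qed (simp add: ell_def dg_ell_def)

locale block_with_low_minimal_labels =
  fixes X :: "nat \<Rightarrow> 'a set" and s t :: "nat \<Rightarrow> 'a \<Rightarrow> 'a" and k :: nat and y :: "'a ldiag ldiag"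
  assumes TT: "y \<in> TTset X s t k"
    and block: "is_block y"
    and minimal_labels_low: "\<And>D. D \<in> set (minimal_labels y) \<Longrightarrow> nontrivial D \<and> Mlev D < mlev y"
begin

lemma labelling: "labelling_in (Tset X s t) (\<lambda>_. Tsrc) (\<lambda>_. Ttgt t) k y"
  using TT by (rule TTset_labelling)

lemma mlev_le: "mlev y \<le> k" and ell_mlev: "1 < ell y (mlev y)"
  using mlev_in_big_levels[of y] block ddim_TTset[OF TT] by (simp_all add: is_block_def big_levels_def)

lemma ell_eq_1_off_mlev: "q \<le> k \<Longrightarrow> q \<noteq> mlev y \<Longrightarrow> ell y q = 1"
  using ell_block_eq_1[OF block] ddim_TTset[OF TT] by simp

lemma minimal_labels_eq:
  "minimal_labels y =
    (if mlev y = k then snd y ! k else (snd y ! mlev y)[fst y ! mlev y ! 0 := label y k 0])"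
  by (simp add: minimal_labels_def ddim_TTset[OF TT] Let_def)

lemma minimal_label_cases:
  assumes "D \<in> set (minimal_labels y)"
  obtains m j where "m = mlev y \<or> m = k" "j < ell y m" "D = label y m j"
proof (cases "mlev y = k")
  case True
  then show ?thesis
    using that assms minimal_labels_eq labelling_in_length_labels[OF labelling]
    by (metis in_set_conv_nth order.refl)
next
  case False
  then have "D \<in> insert (label y k 0) (set (snd y ! mlev y))"
    using assms minimal_labels_eq set_update_subset_insert by fastforce
  moreover have "0 < ell y k" using ell_eq_1_off_mlev[of k] False by simp
  ultimately show ?thesis
    using that labelling_in_length_labels[OF labelling mlev_le] by (auto simp: in_set_conv_nth)
qed

lemma mlev_le_ddim_minimal_label: "D \<in> set (minimal_labels y) \<Longrightarrow> mlev y \<le> ddim D"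
  by (metis minimal_label_cases ddim_label_TTset[OF TT] mlev_le order.refl)

lemma top_label_minimal: "mlev y < k \<Longrightarrow> label y k 0 \<in> set (minimal_labels y)"
  using minimal_labels_eq labelling_in_parent_less[OF labelling, of "mlev y" 0]
    labelling_in_length_labels[OF labelling mlev_le] ell_eq_1_off_mlev[of "Suc (mlev y)"]
  by (simp add: set_update_memI)

lemma label_mlev_minimal:
  assumes "j < ell y (mlev y)" "mlev y < k \<Longrightarrow> j \<noteq> fst y ! mlev y ! 0"
  shows "label y (mlev y) j \<in> set (minimal_labels y)"
proof -
  have "minimal_labels y ! j = label y (mlev y) j"
    using assms minimal_labels_eq mlev_le by auto
  moreover have "length (minimal_labels y) = ell y (mlev y)"
    using minimal_labels_eq labelling_in_length_labels[OF labelling mlev_le]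
    by (cases "mlev y = k") simp_all
  ultimately show ?thesis using assms(1) by (metis nth_mem)
qed

lemma ell_minimal_label_mlev: "D \<in> set (minimal_labels y) \<Longrightarrow> ell D (mlev y) = 1"
  using minimal_labels_low mlev_le_ddim_minimal_label ell_eq_1_above_Mlev
  by (meson nontrivial_def)

text \<open>The one label at level m(B) that is not a minimal label lies below the top label along
  levels with a single cell, so it inherits the single cell at level m(B).\<close>
lemma ell_label_mlev:
  assumes "j < ell y (mlev y)"
  shows "ell (label y (mlev y) j) (mlev y) = 1"
proof (cases "mlev y < k \<and> j = fst y ! mlev y ! 0")
  case True
  have single: "ell y (Suc (mlev y)) = 1" "ell y k = 1"
    using ell_eq_1_off_mlev True by auto
  have "ell (label y (mlev y) j) (mlev y) = ell (label y (Suc (mlev y)) 0) (mlev y)"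
    using ell_label_parent_TTset[OF TT, of "mlev y" 0 "mlev y"] True single by simp
  also have "\<dots> = ell (label y k 0) (mlev y)"
    using ell_label_single_ancestor_TTset[OF TT, of "mlev y" "Suc (mlev y)" k 0] True single
    by simp
  also have "\<dots> = 1"
    using ell_minimal_label_mlev top_label_minimal True by blast
  finally show ?thesis .
qed (use assms label_mlev_minimal ell_minimal_label_mlev in blast)

lemma ell_mu_mlev: "ell (mu y) (mlev y) = ell y (mlev y)"
  using ell_mu_TTset[OF TT mlev_le] ell_label_mlev by simp

lemma ell_mu_above_mlev:
  assumes "mlev y < q" "q \<le> k"
  shows "ell (mu y) q \<le> 1"
proof -
  have top: "label y k 0 \<in> set (minimal_labels y)"
    using top_label_minimal assms by simp
  have "ell (mu y) q = ell (label y k 0) q"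
    using ell_label_eq_ell_mu_TTset[OF TT, of q k 0] ell_eq_1_off_mlev assms by simp
  also have "\<dots> = 1"
  proof (rule ell_eq_1_above_Mlev)
    show "nondegenerate (label y k 0)" "Mlev (label y k 0) < q"
      using minimal_labels_low[OF top] assms(1) by (simp_all add: nontrivial_def)
    show "q \<le> ddim (label y k 0)"
      using ddim_label_TTset[OF TT, of k 0] ell_eq_1_off_mlev[of k] assms by simp
  qed
  finally show ?thesis by simp
qed

lemma ell_minimal_label_below_mlev:
  assumes "D \<in> set (minimal_labels y)" "q < mlev y"
  shows "ell D q = ell (mu y) q"
proof -
  obtain m j where "m = mlev y \<or> m = k" "j < ell y m" "D = label y m j"
    using minimal_label_cases assms(1) .
  then show ?thesis
    using ell_label_eq_ell_mu_TTset[OF TT, of q m j] ell_eq_1_off_mlev[of q] assms(2) mlev_le by auto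
qed

lemma big_levels_mu:
  assumes D: "D \<in> set (minimal_labels y)"
  shows "big_levels (mu y) = insert (mlev y) (big_levels D)"
proof -
  have "x \<in> big_levels (mu y) \<longleftrightarrow> x \<in> insert (mlev y) (big_levels D)" for x
  proof (cases x "mlev y" rule: linorder_cases)
    case less
    then show ?thesis
      using ell_minimal_label_below_mlev[OF D less] mlev_le_ddim_minimal_label[OF D] mlev_le
        ddim_mu_TTset[OF TT] by (auto simp: big_levels_def)
  next
    case equal
    then show ?thesis
      using ell_mu_mlev ell_mlev mlev_le ddim_mu_TTset[OF TT] by (simp add: big_levels_def)
  next
    case greater
    then have "x \<notin> big_levels D"
      using big_levels_le_Mlev minimal_labels_low[OF D] by fastforce
    then show ?thesis
      using greater ell_mu_above_mlev[OF greater] ddim_mu_TTset[OF TT] by (auto simp: big_levels_def)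
  qed
  then show ?thesis by blast
qed

end

theorem mainTheorem7:
  fixes X :: "nat \<Rightarrow> 'a set" and s t :: "nat \<Rightarrow> 'a \<Rightarrow> 'a"
    and n k :: nat and y :: "'a ldiag ldiag"
  assumes "globular n X s t"
    and "k \<le> n"
    and "y \<in> TTset X s t k"
    and "is_block y"
    and "\<forall>D\<in>set (minimal_labels y). nontrivial D \<and> Mlev D < mlev y"
  shows "\<forall>D\<in>set (minimal_labels y). H D = H (mu y) - 1"
proof
  interpret block_with_low_minimal_labels X s t k y
    using assms(3-5) by unfold_locales auto
  fix D assume D: "D \<in> set (minimal_labels y)"
  have "mlev y \<notin> big_levels D"
    using ell_minimal_label_mlev[OF D] by (simp add: big_levels_def)
  then show "H D = H (mu y) - 1"
    using big_levels_mu[OF D] by (simp add: H_def finite_big_levels)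
qed

end
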